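(* Let $P$ be a finite set of points in the Euclidean plane with $|P|$ even, and let $M$ be a $2$-local maximum perfect matching on $P$. Let $M^*$ be a maximum-length perfect matching on $P$. Then $w(M)\geqslant \sqrt{3/7}\, w(M^* )$.
   Context: A perfect matching on a finite point set $P$ in the plane is a partition of $P$ into pairs; each pair $\{a,b\}$ is regarded as the straight-line segment (edge) $ab$. For a set $E$ of segments, $w(E)$ denotes the sum of the Euclidean lengths of its segments. A perfect matching $M$ on $P$ is a maximum-length (globally maximum) matching if $w(M)\geqslant w(M')$ for every perfect matching $M'$ on $P$. For an integer $k$, a perfect matching $M$ is $k$-local maximum if for every subset $M'=\{a_1b_1,\dots,a_kb_k\}$ of $k$ edges of $M$, $M'$ is a maximum-length perfect matching on the point set $\{a_1,b_1,\dots,a_k,b_k\}$. *)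

theory Defs
  imports "HOL-Analysis.Analysis"
begin

type_synonym point = "real^2"

definition seg_len :: "point set \<Rightarrow> real" where
  "seg_len e = (THE d. \<exists>a b. e = {a, b} \<and> d = dist a b)"

definition wt :: "point set set \<Rightarrow> real" where
  "wt E = (\<Sum>e\<in>E. seg_len e)"

definition perfect_matching :: "point set \<Rightarrow> point set set \<Rightarrow> bool" where
  "perfect_matching P M \<longleftrightarrow>
     (\<forall>e\<in>M. \<exists>a b. a \<noteq> b \<and> e = {a, b}) \<and>
     pairwise disjnt M \<and> \<Union>M = P"

definition max_matching :: "point set \<Rightarrow> point set set \<Rightarrow> bool" where
  "max_matching P M \<longleftrightarrow> perfect_matching P M \<and>
     (\<forall>M'. perfect_matching P M' \<longrightarrow> wt M' \<le> wt M)"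

definition local_max_matching :: "nat \<Rightarrow> point set \<Rightarrow> point set set \<Rightarrow> bool" where
  "local_max_matching k P M \<longleftrightarrow> perfect_matching P M \<and>
     (\<forall>M'\<subseteq>M. card M' = k \<longrightarrow> max_matching (\<Union>M') M')"

end

theory Submission
  imports Defs
begin

(* By 2-local maximality, exchanging two edges ab, cd of M for ac, bd never increases the length,
   so the midpoints of ab and cd are at distance at most (|ab| + |cd|)/2: the disks having the
   edges of M as diameters pairwise intersect. Pairwise intersecting disks inflated by the factor
   2/sqrt 3 have a common point whenever there are three of them, so by Helly's theorem in the
   plane some point z lies within |ab|/sqrt 3 of the midpoint of every edge ab of M. The
   parallelogram law then gives |az| + |bz| <= sqrt (7/3) |ab|. Summing over the edges of M and
   using the triangle inequality along the edges of Mstar, we get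
   w(Mstar) <= sum of |pz| over p in P <= sqrt (7/3) w(M). *)

lemma continuous_on_Max:
  fixes g :: "'i \<Rightarrow> 'a::topological_space \<Rightarrow> real"
  assumes "finite I" "I \<noteq> {}" "\<And>i. i \<in> I \<Longrightarrow> continuous_on S (g i)"
  shows "continuous_on S (\<lambda>x. Max ((\<lambda>i. g i x) ` I))"
  using assms
proof (induction I rule: finite_ne_induct)
  case (insert i I)
  have "(\<lambda>x. Max ((\<lambda>j. g j x) ` insert i I)) = (\<lambda>x. max (g i x) (Max ((\<lambda>j. g j x) ` I)))"
    using insert by auto
  then show ?case
    using insert by (auto intro!: continuous_on_max)
qed simp

lemma continuous_attains_global_min:
  fixes F :: "'a::heine_borel \<Rightarrow> real"
  assumes "continuous_on (cball a R) F" and outside: "\<And>x. R < dist a x \<Longrightarrow> F a \<le> F x"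
  shows "\<exists>z. \<forall>x. F z \<le> F x"
proof (cases "R < 0")
  case True
  then show ?thesis
    using outside by (meson zero_le_dist less_le_trans)
next
  case False
  then obtain z where z_min: "\<forall>y\<in>cball a R. F z \<le> F y"
    using continuous_attains_inf[OF compact_cball _ assms(1)] by force
  have "F z \<le> F x" for x
  proof (cases "x \<in> cball a R")
    case False
    then have "F a \<le> F x"
      by (simp add: outside)
    moreover have "F z \<le> F a"
      using z_min \<open>\<not> R < 0\<close> by simp
    ultimately show ?thesis
      by linarith
  qed (use z_min in blast)
  then show ?thesis
    by blast
qed

lemma eventually_dist_less_along_descent:
  fixes z v m :: "'a::real_inner"
  assumes "inner v (z - m) < 0"
  shows "\<forall>\<^sub>F t in at_right 0. dist (z + t *\<^sub>R v) m < dist z m"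
proof -
  have "((\<lambda>t. 2 * inner v (z - m) + t * norm v ^ 2) \<longlongrightarrow> 2 * inner v (z - m)) (at_right 0)"
    by (auto intro!: tendsto_eq_intros)
  then have "\<forall>\<^sub>F t in at_right 0. 2 * inner v (z - m) + t * norm v ^ 2 < 0"
    using assms by (auto intro: order_tendstoD(2))
  with eventually_at_right_less[of "0::real"] show ?thesis
  proof eventually_elim
    case (elim t)
    have expand: "norm (w + t *\<^sub>R v) ^ 2 = norm w ^ 2 + t * (2 * inner v w + t * norm v ^ 2)" for w
      using dot_norm[of w "t *\<^sub>R v"] by (simp add: inner_commute power_mult_distrib power2_eq_square algebra_simps)
    have "dist (z + t *\<^sub>R v) m ^ 2 = dist z m ^ 2 + t * (2 * inner v (z - m) + t * norm v ^ 2)"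
      using expand[of "z - m"] by (simp add: dist_norm algebra_simps)
    also have "\<dots> < dist z m ^ 2"
      using elim by (simp add: mult_pos_neg)
    finally show ?case
      by (rule power_less_imp_less_base) simp
  qed
qed

definition max_rel_dist :: "('i \<Rightarrow> 'a::metric_space) \<Rightarrow> ('i \<Rightarrow> real) \<Rightarrow> 'i set \<Rightarrow> 'a \<Rightarrow> real"
  where "max_rel_dist m r I x = Max ((\<lambda>i. dist x (m i) / r i) ` I)"

lemma rel_dist_le_max_rel_dist:
  "finite I \<Longrightarrow> i \<in> I \<Longrightarrow> dist x (m i) / r i \<le> max_rel_dist m r I x"
  by (simp add: max_rel_dist_def)

lemma max_rel_dist_less_iff:
  "finite I \<Longrightarrow> I \<noteq> {} \<Longrightarrow> max_rel_dist m r I x < c \<longleftrightarrow> (\<forall>i\<in>I. dist x (m i) / r i < c)"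
  by (simp add: max_rel_dist_def)

lemma max_rel_dist_attains_min:
  fixes m :: "'i \<Rightarrow> 'a::heine_borel"
  assumes I: "finite I" "I \<noteq> {}" and r_pos: "\<And>i. i \<in> I \<Longrightarrow> r i > 0"
  shows "\<exists>z. \<forall>x. max_rel_dist m r I z \<le> max_rel_dist m r I x"
proof -
  let ?F = "max_rel_dist m r I"
  obtain i0 where i0: "i0 \<in> I"
    using I(2) by blast
  have "continuous_on UNIV ?F"
    unfolding max_rel_dist_def divide_inverse
    using I by (intro continuous_on_Max continuous_intros)
  moreover have "?F (m i0) \<le> ?F x" if "r i0 * ?F (m i0) < dist (m i0) x" for x
  proof -
    have "?F (m i0) < dist x (m i0) / r i0"
      using that r_pos[OF i0] by (simp add: field_simps dist_commute)
    also have "\<dots> \<le> ?F x"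
      using I(1) i0 by (rule rel_dist_le_max_rel_dist)
    finally show ?thesis
      by simp
  qed
  ultimately show ?thesis
    by (intro continuous_attains_global_min[of "m i0" "r i0 * ?F (m i0)"])
      (auto intro: continuous_on_subset)
qed

lemma max_rel_dist_descent:
  fixes m :: "'i \<Rightarrow> 'a::real_inner"
  assumes I: "finite I" "I \<noteq> {}" and r_pos: "\<And>i. i \<in> I \<Longrightarrow> r i > 0"
    and descent: "\<And>i. i \<in> I \<Longrightarrow> dist z (m i) / r i = max_rel_dist m r I z \<Longrightarrow> inner v (z - m i) < 0"
  shows "\<exists>x. max_rel_dist m r I x < max_rel_dist m r I z"
proof -
  let ?F = "max_rel_dist m r I"
  have "\<forall>\<^sub>F t in at_right 0. \<forall>i\<in>I. dist (z + t *\<^sub>R v) (m i) / r i < ?F z"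
  proof (rule eventually_ball_finite[OF I(1)], intro ballI)
    fix i assume i: "i \<in> I"
    show "\<forall>\<^sub>F t in at_right 0. dist (z + t *\<^sub>R v) (m i) / r i < ?F z"
    proof (cases "dist z (m i) / r i = ?F z")
      case True
      show ?thesis
        using eventually_dist_less_along_descent[OF descent[OF i True]]
      proof eventually_elim
        case (elim t)
        then show ?case
          using True r_pos[OF i] by (metis divide_strict_right_mono)
      qed
    next
      case False
      then have "dist z (m i) / r i < ?F z"
        using rel_dist_le_max_rel_dist[OF I(1) i] by (simp add: order_less_le)
      moreover have "((\<lambda>t. dist (z + t *\<^sub>R v) (m i) / r i) \<longlongrightarrow> dist z (m i) / r i) (at_right 0)"
        using r_pos[OF i] by (auto intro!: tendsto_eq_intros)
      ultimately show ?thesis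
        by (auto intro: order_tendstoD(2))
    qed
  qed
  then obtain t where "\<forall>i\<in>I. dist (z + t *\<^sub>R v) (m i) / r i < ?F z"
    using eventually_happens' trivial_limit_at_right_real by blast
  then show ?thesis
    using max_rel_dist_less_iff[OF I] by blast
qed

lemma exists_descent_direction:
  fixes u :: "'i \<Rightarrow> 'a::real_inner"
  assumes A: "finite A" "card A \<le> 3"
    and nonzero: "\<And>i. i \<in> A \<Longrightarrow> u i \<noteq> 0"
    and wide: "\<And>i j. i \<in> A \<Longrightarrow> j \<in> A \<Longrightarrow> i \<noteq> j \<Longrightarrow>
      inner (u i) (u j) > - (1/2) * norm (u i) * norm (u j)"
  shows "\<exists>v. \<forall>i\<in>A. inner v (u i) < 0"
proof (intro exI ballI)
  fix i assume i: "i \<in> A"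
  define g where "g j = inner (sgn (u j)) (u i)" for j
  have g_i: "g i = norm (u i)"
    using nonzero[OF i] by (simp add: g_def sgn_div_norm power2_norm_eq_inner[symmetric] power2_eq_square)
  have g_others: "g j > - norm (u i) / 2" if "j \<in> A - {i}" for j
    using wide[of j i] nonzero[of j] that i by (simp add: g_def sgn_div_norm field_simps)
  have "(\<Sum>j\<in>A-{i}. g j) > - norm (u i)"
  proof (cases "A - {i} = {}")
    case True
    then show ?thesis
      using nonzero[OF i] by (simp only: sum.empty) simp
  next
    case False
    have "card (A - {i}) \<le> 2"
      using A i by (simp add: card_Diff_singleton)
    then have "real (card (A - {i})) * norm (u i) \<le> 2 * norm (u i)"
      by (intro mult_right_mono) auto
    then have "- norm (u i) \<le> (\<Sum>j\<in>A-{i}. - norm (u i) / 2)"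
      by simp
    also have "\<dots> < (\<Sum>j\<in>A-{i}. g j)"
      using A False g_others by (intro sum_strict_mono) auto
    finally show ?thesis .
  qed
  moreover have "inner (- (\<Sum>j\<in>A. sgn (u j))) (u i) = - (g i + (\<Sum>j\<in>A-{i}. g j))"
    using A i by (simp add: g_def inner_sum_left inner_diff_left sum.remove)
  ultimately show "inner (- (\<Sum>j\<in>A. sgn (u j))) (u i) < 0"
    using g_i by linarith
qed

lemma inner_gt_neg_half_norm_mult:
  fixes x y :: "'a::real_inner"
  assumes x: "norm x = s * a" and y: "norm y = s * b" and "a > 0" "b > 0"
    and s: "s ^ 2 > 4/3" and close: "norm (x - y) \<le> a + b"
  shows "inner x y > - (1/2) * norm x * norm y"
proof -
  have "norm (x - y) ^ 2 \<le> (a + b) ^ 2"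
    using close by (simp add: power_mono)
  also have "\<dots> \<le> 4/3 * (a ^ 2 + b ^ 2 + a * b)"
  proof -
    have "4/3 * (a ^ 2 + b ^ 2 + a * b) - (a + b) ^ 2 = (a - b) ^ 2 / 3"
      by (simp add: power2_eq_square algebra_simps)
    then show ?thesis
      using zero_le_power2[of "a - b"] by linarith
  qed
  also have "\<dots> < s ^ 2 * (a ^ 2 + b ^ 2 + a * b)"
    using s \<open>a > 0\<close> \<open>b > 0\<close>
    by (intro mult_strict_right_mono add_pos_pos mult_pos_pos zero_less_power) auto
  also have "\<dots> = norm x ^ 2 + norm y ^ 2 + norm x * norm y"
    using x y by (simp add: power2_eq_square algebra_simps)
  finally show ?thesis
    using dot_norm_neg[of x y] by simp
qed

(* A minimiser z of the largest relative distance works: if that value exceeded 2/sqrt 3, the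
   centres attaining it would be seen from z at pairwise angles below 120 degrees, so some
   direction would move z closer to all of them. *)
lemma three_balls_inflated_common_point:
  fixes m :: "'i \<Rightarrow> 'a::euclidean_space" and r :: "'i \<Rightarrow> real"
  assumes I: "finite I" "card I \<le> 3"
    and r_pos: "\<And>i. i \<in> I \<Longrightarrow> r i > 0"
    and touching: "\<And>i j. i \<in> I \<Longrightarrow> j \<in> I \<Longrightarrow> dist (m i) (m j) \<le> r i + r j"
  shows "\<exists>z. \<forall>i\<in>I. dist z (m i) ^ 2 \<le> 4/3 * r i ^ 2"
proof (cases "I = {}")
  case False
  let ?F = "max_rel_dist m r I"
  obtain z where z_min: "\<And>x. ?F z \<le> ?F x"
    using max_rel_dist_attains_min[OF I(1) False, of r m] r_pos by blast
  show ?thesis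
  proof (rule ccontr)
    assume no_point: "\<not> ?thesis"
    have big: "?F z ^ 2 > 4/3"
    proof (rule ccontr)
      assume small: "\<not> ?F z ^ 2 > 4/3"
      have "dist z (m i) ^ 2 \<le> 4/3 * r i ^ 2" if i: "i \<in> I" for i
      proof -
        have "dist z (m i) / r i \<le> ?F z"
          using I(1) i by (rule rel_dist_le_max_rel_dist)
        then have "(dist z (m i) / r i) ^ 2 \<le> ?F z ^ 2"
          using r_pos[OF i] by (intro power_mono) simp_all
        then have "dist z (m i) ^ 2 \<le> ?F z ^ 2 * r i ^ 2"
          using r_pos[OF i] by (simp add: power_divide field_simps)
        also have "\<dots> \<le> 4/3 * r i ^ 2"
          using small by (intro mult_right_mono) simp_all
        finally show ?thesis .
      qed
      with no_point show False
        by blast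
    qed
    define A where "A = {i \<in> I. dist z (m i) / r i = ?F z}"
    have A_sub: "A \<subseteq> I"
      by (simp add: A_def)
    have norm_active: "norm (z - m i) = ?F z * r i" if "i \<in> A" for i
      using that r_pos[of i] by (simp add: A_def dist_norm field_simps)
    have "?F z \<noteq> 0"
      using big by auto
    have "\<exists>v. \<forall>i\<in>A. inner v (z - m i) < 0"
    proof (rule exists_descent_direction)
      show "finite A"
        using I(1) A_sub by (rule finite_subset[rotated])
      show "card A \<le> 3"
        using card_mono[OF I(1) A_sub] I(2) by linarith
      show "z - m i \<noteq> 0" if "i \<in> A" for i
        using norm_active[OF that] r_pos[of i] A_sub that \<open>?F z \<noteq> 0\<close> by auto
      show "inner (z - m i) (z - m j) > - (1/2) * norm (z - m i) * norm (z - m j)"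
        if i: "i \<in> A" and j: "j \<in> A" for i j
      proof (rule inner_gt_neg_half_norm_mult[OF norm_active[OF i] norm_active[OF j]])
        show "r i > 0" "r j > 0"
          using i j A_sub r_pos by auto
        show "norm ((z - m i) - (z - m j)) \<le> r i + r j"
          using i j A_sub touching[of i j] by (auto simp: dist_norm norm_minus_commute)
      qed (rule big)
    qed
    then obtain v where "\<And>i. i \<in> A \<Longrightarrow> inner v (z - m i) < 0"
      by blast
    then obtain x where "?F x < ?F z"
      using max_rel_dist_descent[OF I(1) False, of r z m v] r_pos unfolding A_def by blast
    with z_min show False
      by (meson not_le)
  qed
qed simp

lemma Helly_indexed:
  fixes D :: "'i \<Rightarrow> 'a::euclidean_space set"
  assumes "finite I" and convex: "\<And>i. i \<in> I \<Longrightarrow> convex (D i)"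
    and small: "\<And>J. J \<subseteq> I \<Longrightarrow> card J \<le> DIM('a) + 1 \<Longrightarrow> \<exists>z. \<forall>i\<in>J. z \<in> D i"
  shows "\<exists>z. \<forall>i\<in>I. z \<in> D i"
proof -
  have small_image: "\<Inter>T \<noteq> {}" if "T \<subseteq> D ` I" "card T \<le> DIM('a) + 1" for T
  proof -
    obtain J where J: "J \<subseteq> I" "inj_on D J" "T = D ` J"
      using subset_image_inj[of T D I] \<open>T \<subseteq> D ` I\<close> by blast
    then have "card J \<le> DIM('a) + 1"
      using that(2) by (simp add: card_image)
    then show ?thesis
      using small[OF J(1)] J(3) by blast
  qed
  have "\<Inter>(D ` I) \<noteq> {}"
  proof (cases "card (D ` I) \<ge> DIM('a) + 1")
    case True
    show ?thesis
    proof (rule Helly)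
      show "\<forall>S\<in>D ` I. convex S"
        using convex by blast
    qed (use True small_image in auto)
  qed (simp add: small_image)
  then show ?thesis
    by blast
qed

lemma dist_midpoints_le:
  fixes a b c d :: "'a::real_normed_vector"
  assumes "dist a c + dist b d \<le> dist a b + dist c d"
  shows "dist (midpoint a b) (midpoint c d) \<le> (dist a b + dist c d) / 2"
proof -
  have "midpoint a b - midpoint c d = (1/2) *\<^sub>R ((a - c) + (b - d))"
    by (simp add: midpoint_def algebra_simps)
  then have "dist (midpoint a b) (midpoint c d) \<le> (dist a c + dist b d) / 2"
    using norm_triangle_ineq[of "a - c" "b - d"] by (simp add: dist_norm)
  also have "\<dots> \<le> (dist a b + dist c d) / 2"
    using assms by (rule divide_right_mono) simp
  finally show ?thesis .
qed

lemma dist_add_dist_le_near_midpoint: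
  fixes a b z :: "'a::real_inner"
  assumes "dist z (midpoint a b) ^ 2 \<le> dist a b ^ 2 / 3"
  shows "dist a z + dist b z \<le> sqrt (7/3) * dist a b"
proof -
  define w h where "w = midpoint a b - z" and "h = (1/2) *\<^sub>R (a - b)"
  have "a - z = w + h" "b - z = w - h"
    by (simp_all add: w_def h_def midpoint_def algebra_simps) (simp_all flip: scaleR_add_right)
  then have "dist a z ^ 2 + dist b z ^ 2 = 2 * norm w ^ 2 + 2 * norm h ^ 2"
    using dot_norm[of w h] dot_norm_neg[of w h] by (simp add: dist_norm)
  also have "norm h ^ 2 = dist a b ^ 2 / 4"
    by (simp add: h_def dist_norm power_mult_distrib power2_eq_square)
  also have "norm w ^ 2 \<le> dist a b ^ 2 / 3"
    using assms by (simp add: w_def dist_norm norm_minus_commute)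
  finally have "(dist a z + dist b z) ^ 2 \<le> 7/3 * dist a b ^ 2"
    using zero_le_power2[of "dist a z - dist b z"] by (simp add: power2_eq_square algebra_simps)
  then have "dist a z + dist b z \<le> sqrt (7/3 * dist a b ^ 2)"
    by (simp add: real_le_rsqrt)
  also have "\<dots> = sqrt (7/3) * dist a b"
    by (simp only: real_sqrt_mult) simp
  finally show ?thesis .
qed

lemma seg_len_pair [simp]: "seg_len {a, b} = dist a b"
  unfolding seg_len_def by (rule the_equality) (auto simp: doubleton_eq_iff dist_commute)

lemma perfect_matching_edge_neq:
  assumes "perfect_matching P M" "{a, b} \<in> M"
  shows "a \<noteq> b"
proof -
  obtain x y where "x \<noteq> y" "{a, b} = {x, y}"
    using assms unfolding perfect_matching_def by blast
  then show ?thesis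
    by (auto simp: doubleton_eq_iff)
qed

lemma sum_over_perfect_matching:
  assumes "perfect_matching P N"
  shows "(\<Sum>x\<in>P. g x) = (\<Sum>e\<in>N. \<Sum>x\<in>e. g x)"
proof -
  have "\<forall>e\<in>N. finite e" and "\<forall>e\<in>N. \<forall>e'\<in>N. e \<noteq> e' \<longrightarrow> e \<inter> e' = {}" and "P = \<Union>N"
    using assms unfolding perfect_matching_def pairwise_def disjnt_def by auto
  then show ?thesis
    by (simp add: sum.Union_disjoint)
qed

lemma wt_le_sum_dist:
  assumes "perfect_matching P N"
  shows "wt N \<le> (\<Sum>x\<in>P. dist x z)"
proof -
  have "seg_len e \<le> (\<Sum>x\<in>e. dist x z)" if "e \<in> N" for e
  proof -
    obtain a b where "a \<noteq> b" "e = {a, b}"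
      using assms \<open>e \<in> N\<close> unfolding perfect_matching_def by blast
    then show ?thesis
      by (simp add: dist_triangle2)
  qed
  then show ?thesis
    unfolding wt_def sum_over_perfect_matching[OF assms] by (rule sum_mono)
qed

lemma local_max_matching_2_swap:
  assumes "local_max_matching 2 P M" "{a, b} \<in> M" "{c, d} \<in> M" "{a, b} \<noteq> {c, d}"
  shows "dist a c + dist b d \<le> dist a b + dist c d"
proof -
  have M: "perfect_matching P M" and pairs: "\<forall>M'\<subseteq>M. card M' = 2 \<longrightarrow> max_matching (\<Union>M') M'"
    using assms(1) unfolding local_max_matching_def by simp_all
  have two: "max_matching (\<Union>{{a, b}, {c, d}}) {{a, b}, {c, d}}"
  proof -
    have "card {{a, b}, {c, d}} = 2"
      using assms(4) by simp
    then show ?thesis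
      using assms(2,3) by (intro pairs[rule_format]) auto
  qed
  have "a \<noteq> b" "c \<noteq> d"
    using perfect_matching_edge_neq[OF M] assms(2,3) by auto
  moreover have "disjnt {a, b} {c, d}"
    using M assms(2-4) unfolding perfect_matching_def by (auto dest: pairwiseD)
  ultimately have distinct: "a \<noteq> b" "c \<noteq> d" "a \<noteq> c" "a \<noteq> d" "b \<noteq> c" "b \<noteq> d"
    unfolding disjnt_def by auto
  have "perfect_matching (\<Union>{{a, b}, {c, d}}) {{a, c}, {b, d}}"
    using distinct unfolding perfect_matching_def by (auto simp: pairwise_insert disjnt_def)
  then have "wt {{a, c}, {b, d}} \<le> wt {{a, b}, {c, d}}"
    using two unfolding max_matching_def by blast
  moreover have "{a, c} \<noteq> {b, d}"
    using distinct by (auto simp: doubleton_eq_iff)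
  ultimately show ?thesis
    using assms(4) by (simp add: wt_def)
qed

lemma local_max_matching_2_common_point:
  assumes "finite P" and M: "local_max_matching 2 P M"
  shows "\<exists>z. \<forall>a b. {a, b} \<in> M \<longrightarrow> dist z (midpoint a b) ^ 2 \<le> dist a b ^ 2 / 3"
proof -
  have pm: "perfect_matching P M"
    using M by (simp add: local_max_matching_def)
  \<comment> \<open>Edges are indexed by their ordered pairs of endpoints, so no orientation has to be chosen.\<close>
  define I where "I = {(a, b). {a, b} \<in> M}"
  define D :: "point \<times> point \<Rightarrow> point set"
    where "D = (\<lambda>(a, b). cball (midpoint a b) (dist a b / sqrt 3))"
  have in_D: "z \<in> D i \<longleftrightarrow> dist z (midpoint (fst i) (snd i)) ^ 2 \<le> dist (fst i) (snd i) ^ 2 / 3"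
    for z i
  proof -
    have "dist (fst i) (snd i) / sqrt 3 = sqrt (dist (fst i) (snd i) ^ 2 / 3)"
      by (simp add: real_sqrt_divide)
    then show ?thesis
      using real_le_rsqrt[of "dist z (midpoint (fst i) (snd i))" "dist (fst i) (snd i) ^ 2 / 3"]
        sqrt_ge_absD[of "dist z (midpoint (fst i) (snd i))" "dist (fst i) (snd i) ^ 2 / 3"]
      by (auto simp: D_def case_prod_beta dist_commute)
  qed
  have "I \<subseteq> P \<times> P"
    using pm by (auto simp: I_def perfect_matching_def)
  then have "finite I"
    using assms(1) by (auto intro: finite_subset)
  have "\<exists>z. \<forall>i\<in>I. z \<in> D i"
  proof (rule Helly_indexed[OF \<open>finite I\<close>])
    show "convex (D i)" for i
      by (simp add: D_def case_prod_beta)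
    fix J assume J: "J \<subseteq> I" "card J \<le> DIM(point) + 1"
    have "\<exists>z. \<forall>i\<in>J. dist z (midpoint (fst i) (snd i)) ^ 2 \<le> 4/3 * (dist (fst i) (snd i) / 2) ^ 2"
    proof (rule three_balls_inflated_common_point[where m = "\<lambda>i. midpoint (fst i) (snd i)"
          and r = "\<lambda>i. dist (fst i) (snd i) / 2"])
      show "finite J" "card J \<le> 3"
        using J \<open>finite I\<close> by (auto intro: finite_subset)
      fix i j assume "i \<in> J" "j \<in> J"
      obtain a b c d where ij: "i = (a, b)" "j = (c, d)"
        by (cases i, cases j)
      then have edges: "{a, b} \<in> M" "{c, d} \<in> M"
        using J(1) \<open>i \<in> J\<close> \<open>j \<in> J\<close> by (auto simp: I_def)
      show "dist (fst i) (snd i) / 2 > 0"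
        using perfect_matching_edge_neq[OF pm edges(1)] ij by simp
      show "dist (midpoint (fst i) (snd i)) (midpoint (fst j) (snd j))
          \<le> dist (fst i) (snd i) / 2 + dist (fst j) (snd j) / 2"
      proof (cases "{a, b} = {c, d}")
        case True
        then have "midpoint a b = midpoint c d"
          by (auto simp: doubleton_eq_iff midpoint_sym)
        then show ?thesis
          using ij by simp
      next
        case False
        have "dist (midpoint a b) (midpoint c d) \<le> (dist a b + dist c d) / 2"
          using local_max_matching_2_swap[OF M edges False] by (rule dist_midpoints_le)
        then show ?thesis
          using ij by (simp add: add_divide_distrib)
      qed
    qed
    then show "\<exists>z. \<forall>i\<in>J. z \<in> D i"
      by (auto simp: in_D power_divide)
  qed
  then show ?thesis
    by (auto simp: I_def in_D)
qed

theorem theorem7: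
  fixes P :: "point set" and M Mstar :: "point set set"
  assumes "finite P" and "even (card P)"
    and "local_max_matching 2 P M"
    and "max_matching P Mstar"
  shows "wt M \<ge> sqrt (3/7) * wt Mstar"
proof -
  have M: "perfect_matching P M" and Mstar: "perfect_matching P Mstar"
    using assms(3,4) by (simp_all add: local_max_matching_def max_matching_def)
  obtain z where z: "\<And>a b. {a, b} \<in> M \<Longrightarrow> dist z (midpoint a b) ^ 2 \<le> dist a b ^ 2 / 3"
    using local_max_matching_2_common_point[OF assms(1,3)] by blast
  have "wt Mstar \<le> (\<Sum>x\<in>P. dist x z)"
    using Mstar by (rule wt_le_sum_dist)
  also have "\<dots> = (\<Sum>e\<in>M. \<Sum>x\<in>e. dist x z)"
    using M by (rule sum_over_perfect_matching)
  also have "\<dots> \<le> (\<Sum>e\<in>M. sqrt (7/3) * seg_len e)"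
  proof (rule sum_mono)
    fix e assume "e \<in> M"
    then obtain a b where "a \<noteq> b" "e = {a, b}"
      using M unfolding perfect_matching_def by blast
    then show "(\<Sum>x\<in>e. dist x z) \<le> sqrt (7/3) * seg_len e"
      using dist_add_dist_le_near_midpoint[OF z] \<open>e \<in> M\<close> by simp
  qed
  also have "\<dots> = sqrt (7/3) * wt M"
    by (simp add: wt_def sum_distrib_left)
  finally have "sqrt (3/7) * wt Mstar \<le> sqrt (3/7) * sqrt (7/3) * wt M"
    by (simp add: mult.assoc mult_left_mono)
  also have "\<dots> = wt M"
    by (simp flip: real_sqrt_mult)
  finally show ?thesis .
qed

end
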